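(* Let $e,f\in\mathbb{N}^I$ and $d=e+f$. Then: (a) $w_{e,f}\cdot\rho-\rho=-2\rho_{f,e}$. (b) The map $\beta\mapsto -w_{f,e}\cdot\beta$ is a bijection from $\mathcal{W}_{f,e}$ onto $\mathcal{W}_{e,f}$.
   Context: Let $Q=(I,E)$ be a symmetric quiver (for all $i,j\in I$ the number of arrows $i\to j$ equals the number of arrows $j\to i$). For $d\in\mathbb{N}^I$ let $R(d)=\bigoplus_{a\in E}\mathrm{Hom}(\mathbb{C}^{d_{s(a)}},\mathbb{C}^{d_{t(a)}})$ with $G(d)=\prod_i GL(d_i)$, and let $M=\bigoplus_{i\in I,1\le j\le d_i}\mathbb{Z}\beta^i_j$ be the weight lattice of the diagonal torus. The Weyl group $\mathfrak{S}_d=\prod_{a\in I}\mathfrak{S}_{d_a}$ acts on $M$ by $w\cdot\beta^a_j=\beta^a_{w^a(j)}$ for $w=(w^a)_{a\in I}$. Positive roots are $\beta^a_i-\beta^a_j$ with $i<j$, and $\rho$ is half their sum. Let $\mathcal{W}$ be the multiset of weights of $R(d)$ (for each arrow $a:i\to j$ and $x\le d_i$, $y\le d_j$, the weight $\beta^j_y-\beta^i_x$). For $e,f\in\mathbb{N}^I$ with $e+f=d$, let $\lambda_{e,f}$ be an antidominant cocharacter of the torus of $SG(d)$ associated with the ordered partition $(e,f)$: $\langle\lambda_{e,f},\beta^a_j\rangle=x$ for $j\le e^a$ and $=y$ for $j>e^a$, with fixed reals/integers $x<y$ (normalized so that $\lambda_{e,f}$ lies in $SG(d)$); define $\lambda_{f,e}$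 similarly with the blocks of sizes $f^a$ then $e^a$. Let $\mathcal{W}_{e,f}:=\{\beta\in\mathcal{W}:\langle\lambda_{e,f},\beta\rangle<0\}$ and let $\rho_{e,f}$ be half the sum of the positive roots $\alpha$ with $\langle\lambda_{e,f},\alpha\rangle<0$ (similarly $\mathcal{W}_{f,e}$, $\rho_{f,e}$). Let $w_{e,f}=(w^a)_{a\in I}\in\mathfrak{S}_d$ with $w^a(i)=i+f^a$ for $1\le i\le e^a$ and $w^a(i)=i-e^a$ for $e^a<i\le e^a+f^a$; $w_{f,e}$ is defined with the roles of $e,f$ exchanged (so $w_{f,e}=w_{e,f}^{-1}$). *)

theory Defs
  imports Complex_Main "HOL-Library.Multiset"
begin

text \<open>Quiver: vertex set I, arrow set E with source/target maps.
  Elements of M (tensored with the reals) are functions on pairs (vertex, index);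
  beta a j is the basis vector.\<close>

definition symmetric_quiver :: "'i set \<Rightarrow> 'e set \<Rightarrow> ('e \<Rightarrow> 'i) \<Rightarrow> ('e \<Rightarrow> 'i) \<Rightarrow> bool" where
  "symmetric_quiver I E src tgt \<longleftrightarrow> finite I \<and> finite E \<and> (\<forall>a\<in>E. src a \<in> I \<and> tgt a \<in> I) \<and>
     (\<forall>i\<in>I. \<forall>j\<in>I. card {a\<in>E. src a = i \<and> tgt a = j} = card {a\<in>E. src a = j \<and> tgt a = i})"

type_synonym 'i weight = "'i \<times> nat \<Rightarrow> real"

definition beta :: "'i \<Rightarrow> nat \<Rightarrow> 'i weight" where
  "beta a j = (\<lambda>q. if q = (a, j) then 1 else 0)"

definition idx :: "'i set \<Rightarrow> ('i \<Rightarrow> nat) \<Rightarrow> ('i \<times> nat) set" where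
  "idx I d = {(a, j). a \<in> I \<and> 1 \<le> j \<and> j \<le> d a}"

text \<open>Pairing of a cocharacter (given by its values on the basis) with a weight.\<close>
definition pair :: "'i set \<Rightarrow> ('i \<Rightarrow> nat) \<Rightarrow> 'i weight \<Rightarrow> 'i weight \<Rightarrow> real" where
  "pair I d lam m = (\<Sum>p\<in>idx I d. lam p * m p)"

text \<open>Action of w = (w^a) of the Weyl group: w . beta a j = beta a (w^a j), extended linearly.\<close>
definition weyl_act :: "'i set \<Rightarrow> ('i \<Rightarrow> nat) \<Rightarrow> ('i \<Rightarrow> nat \<Rightarrow> nat) \<Rightarrow> 'i weight \<Rightarrow> 'i weight" where
  "weyl_act I d w m = (\<lambda>q. \<Sum>p\<in>idx I d. m p * beta (fst p) (w (fst p) (snd p)) q)"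

definition pos_roots :: "'i set \<Rightarrow> ('i \<Rightarrow> nat) \<Rightarrow> ('i \<times> nat \<times> nat) set" where
  "pos_roots I d = {(a, i, j). a \<in> I \<and> 1 \<le> i \<and> i < j \<and> j \<le> d a}"

definition root :: "'i \<times> nat \<times> nat \<Rightarrow> 'i weight" where
  "root r = (case r of (a, i, j) \<Rightarrow> (\<lambda>q. beta a i q - beta a j q))"

definition rho :: "'i set \<Rightarrow> ('i \<Rightarrow> nat) \<Rightarrow> 'i weight" where
  "rho I d = (\<lambda>q. (1/2) * (\<Sum>r\<in>pos_roots I d. root r q))"

text \<open>Cocharacter lambda_{e,f} with values x (first e^a indices) and y (remaining).\<close>
definition lam :: "('i \<Rightarrow> nat) \<Rightarrow> real \<Rightarrow> real \<Rightarrow> 'i weight" where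
  "lam e x y = (\<lambda>(a, j). if j \<le> e a then x else y)"

definition rho_part :: "'i set \<Rightarrow> ('i \<Rightarrow> nat) \<Rightarrow> 'i weight \<Rightarrow> 'i weight" where
  "rho_part I d l = (\<lambda>q. (1/2) * (\<Sum>r\<in>{r\<in>pos_roots I d. pair I d l (root r) < 0}. root r q))"

text \<open>Multiset of weights of R(d): for each arrow a : i -> j and x \<le> d_i, y \<le> d_j,
  the weight beta j y - beta i x.\<close>
definition weights :: "'e set \<Rightarrow> ('e \<Rightarrow> 'i) \<Rightarrow> ('e \<Rightarrow> 'i) \<Rightarrow> ('i \<Rightarrow> nat) \<Rightarrow> 'i weight multiset" where
  "weights E src tgt d =
     image_mset (\<lambda>(a, x, y). (\<lambda>q. beta (tgt a) y q - beta (src a) x q))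
       (mset_set {(a, x, y). a \<in> E \<and> 1 \<le> x \<and> x \<le> d (src a) \<and> 1 \<le> y \<and> y \<le> d (tgt a)})"

definition weights_neg :: "'i set \<Rightarrow> 'e set \<Rightarrow> ('e \<Rightarrow> 'i) \<Rightarrow> ('e \<Rightarrow> 'i) \<Rightarrow> ('i \<Rightarrow> nat) \<Rightarrow> 'i weight \<Rightarrow> 'i weight multiset" where
  "weights_neg I E src tgt d l = filter_mset (\<lambda>b. pair I d l b < 0) (weights E src tgt d)"

definition wef :: "('i \<Rightarrow> nat) \<Rightarrow> ('i \<Rightarrow> nat) \<Rightarrow> 'i \<Rightarrow> nat \<Rightarrow> nat" where
  "wef e f a i = (if 1 \<le> i \<and> i \<le> e a then i + f a
                  else if e a < i \<and> i \<le> e a + f a then i - e a else i)"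

end

theory Submission
  imports Defs
begin

text \<open>
  Both parts are coordinate computations. The permutation \<open>w_{e,f}\<close> has inverse
  \<open>w_{f,e}\<close>, which moves an index \<open>k\<close> at vertex \<open>a\<close> up by \<open>e a\<close> if \<open>k \<le> f a\<close> and down
  by \<open>f a\<close> otherwise. As \<open>\<rho>\<close> has coordinate \<open>(d a + 1 - 2 k) / 2\<close>, the coordinate of
  \<open>w_{e,f} \<rho> - \<rho>\<close> is \<open>-e a\<close> resp. \<open>f a\<close>. The same values arise from \<open>-2 \<rho>_{f,e}\<close>,
  because the positive roots negative for \<open>\<lambda>_{f,e}\<close> are the \<open>\<beta>(a, i) - \<beta>(a, j)\<close> with
  \<open>i \<le> f a < j\<close>.

  The weights of an arrow \<open>a\<close> negative for \<open>\<lambda>_{f,e}\<close> are the \<open>\<beta>(tgt a, j) - \<beta>(src a, i)\<close>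
  with \<open>j \<le> f (tgt a)\<close> and \<open>i > f (src a)\<close>. Applying \<open>-w_{f,e}\<close> gives
  \<open>\<beta>(src a, i - f (src a)) - \<beta>(tgt a, j + e (tgt a))\<close>, which is negative for \<open>\<lambda>_{e,f}\<close> and
  is a weight of any arrow from \<open>tgt a\<close> to \<open>src a\<close>. Since the quiver is symmetric, some
  bijection of the arrows reverses every arrow, and it turns this correspondence into a
  bijection between the index sets of the two multisets.
\<close>

lemma finite_idx: "finite I \<Longrightarrow> finite (idx I d)"
  by (rule finite_subset[of _ "Sigma I (\<lambda>a. {1..d a})"]) (auto simp: idx_def)

lemma finite_pos_roots: "finite I \<Longrightarrow> finite (pos_roots I d)"
  by (rule finite_subset[of _ "Sigma I (\<lambda>a. {1..d a} \<times> {1..d a})"]) (auto simp: pos_roots_def)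

lemma sum_beta_mult:
  assumes "finite A"
  shows "(\<Sum>p\<in>A. beta a j p * F p) = (if (a, j) \<in> A then F (a, j) else 0)"
proof -
  have "(\<Sum>p\<in>A. beta a j p * F p) = (\<Sum>p\<in>A. if (a, j) = p then F (a, j) else 0)"
    by (rule sum.cong) (auto simp: beta_def)
  then show ?thesis using assms by (simp add: sum.delta)
qed

lemma pair_beta: "finite I \<Longrightarrow> (a, j) \<in> idx I d \<Longrightarrow> pair I d l (beta a j) = l (a, j)"
  by (simp add: pair_def mult.commute[of "l _"] sum_beta_mult finite_idx)

lemma pair_diff: "pair I d l (\<lambda>q. m q - m' q) = pair I d l m - pair I d l m'"
  by (simp add: pair_def right_diff_distrib sum_subtractf)

lemma weyl_act_beta:
  "finite I \<Longrightarrow> (a, j) \<in> idx I d \<Longrightarrow> weyl_act I d w (beta a j) = beta a (w a j)"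
  by (simp add: weyl_act_def sum_beta_mult finite_idx)

lemma weyl_act_diff:
  "weyl_act I d w (\<lambda>q. m q - m' q) = (\<lambda>q. weyl_act I d w m q - weyl_act I d w m' q)"
  by (simp add: weyl_act_def left_diff_distrib sum_subtractf)

lemma weyl_act_apply:
  assumes "finite I" "(b, i) \<in> idx I d" "inj_on (w b) {1..d b}"
  shows "weyl_act I d w m (b, w b i) = m (b, i)"
proof -
  have "beta (fst p) (w (fst p) (snd p)) (b, w b i) = (if p = (b, i) then 1 else 0)"
    if "p \<in> idx I d" for p
  proof -
    obtain a j where p: "p = (a, j)" "j \<in> {1..d a}" using \<open>p \<in> idx I d\<close> by (auto simp: idx_def)
    have iff: "(b, w b i) = (a, w a j) \<longleftrightarrow> (a, j) = (b, i)"
    proof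
      assume "(b, w b i) = (a, w a j)"
      moreover have "i \<in> {1..d b}" using assms(2) by (simp add: idx_def)
      ultimately show "(a, j) = (b, i)" using p inj_onD[OF assms(3)] by auto
    qed auto
    show ?thesis unfolding p(1) fst_conv snd_conv beta_def iff by simp
  qed
  then have "weyl_act I d w m (b, w b i) = (\<Sum>p\<in>idx I d. if p = (b, i) then m p else 0)"
    unfolding weyl_act_def by (intro sum.cong) simp_all
  also have "\<dots> = m (b, i)"
    using sum.delta[OF finite_idx[OF assms(1)], of "(b, i)" m] assms(2) by simp
  finally show ?thesis .
qed

lemma weyl_act_outside_idx:
  assumes "(b, k) \<notin> idx I d" "\<forall>a\<in>I. w a ` {1..d a} \<subseteq> {1..d a}"
  shows "weyl_act I d w m (b, k) = 0"
  unfolding weyl_act_def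
proof (rule sum.neutral, intro ballI)
  fix p assume "p \<in> idx I d"
  then obtain a i where "p = (a, i)" "a \<in> I" "i \<in> {1..d a}" by (auto simp: idx_def)
  moreover have "w a i \<in> {1..d a}" using assms(2) calculation by blast
  ultimately show "m p * beta (fst p) (w (fst p) (snd p)) (b, k) = 0"
    using assms(1) by (auto simp: beta_def idx_def)
qed

lemma wef_in_range: "i \<in> {1..e a + f a} \<Longrightarrow> wef e f a i \<in> {1..e a + f a}"
  by (auto simp: wef_def)

lemma wef_wef: "i \<in> {1..e a + f a} \<Longrightarrow> wef f e a (wef e f a i) = i"
  by (auto simp: wef_def)

lemma bij_betw_wef: "bij_betw (wef e f a) {1..e a + f a} {1..e a + f a}"
  by (rule bij_betw_byWitness[where f' = "wef f e a"]) (auto simp: wef_def)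

lemma weyl_act_wef_apply:
  assumes "finite I" "d = (\<lambda>a. e a + f a)" "(b, k) \<in> idx I d"
  shows "weyl_act I d (wef e f) m (b, k) = m (b, wef f e b k)"
proof -
  have k: "k \<in> {1..f b + e b}" using assms(2,3) by (auto simp: idx_def)
  have "(b, wef f e b k) \<in> idx I d"
    using assms(2,3) wef_in_range[of k f b e, OF k] by (auto simp: idx_def)
  moreover have "inj_on (wef e f b) {1..d b}"
    using assms(2) bij_betw_imp_inj_on[OF bij_betw_wef[of e f b]] by simp
  ultimately have "weyl_act I d (wef e f) m (b, wef e f b (wef f e b k)) = m (b, wef f e b k)"
    by (rule weyl_act_apply[OF assms(1)])
  then show ?thesis by (simp only: wef_wef[of k f b e, OF k])
qed

lemma sum_root_apply:
  assumes "finite A"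
  shows "(\<Sum>r\<in>A. root r q) = real (card {r\<in>A. (fst r, fst (snd r)) = q})
                                - real (card {r\<in>A. (fst r, snd (snd r)) = q})"
proof -
  have "(\<Sum>r\<in>A. root r q) = (\<Sum>r\<in>A. (if (fst r, fst (snd r)) = q then 1 else 0)
                                  - (if (fst r, snd (snd r)) = q then 1 else 0))"
    by (rule sum.cong) (auto simp: root_def beta_def split: prod.splits)
  also have "\<dots> = real (card {r\<in>A. (fst r, fst (snd r)) = q})
                   - real (card {r\<in>A. (fst r, snd (snd r)) = q})"
    using assms by (simp add: sum_subtractf sum.If_cases Collect_conj_eq)
  finally show ?thesis .
qed

lemma rho_apply:
  assumes "finite I"
  shows "rho I d (b, k) = (if (b, k) \<in> idx I d then (real (d b) + 1 - 2 * real k) / 2 else 0)"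
proof -
  have up: "{r\<in>pos_roots I d. (fst r, fst (snd r)) = (b, k)}
      = (if (b, k) \<in> idx I d then (\<lambda>j. (b, k, j)) ` {k<..d b} else {})"
    by (auto simp: pos_roots_def idx_def)
  have down: "{r\<in>pos_roots I d. (fst r, snd (snd r)) = (b, k)}
      = (if (b, k) \<in> idx I d then (\<lambda>i. (b, i, k)) ` {1..<k} else {})"
    by (auto simp: pos_roots_def idx_def)
  show ?thesis
    unfolding rho_def sum_root_apply[OF finite_pos_roots[OF assms]] up down
    by (simp add: card_image inj_on_def of_nat_diff field_simps idx_def)
qed

lemma pair_root:
  "finite I \<Longrightarrow> (a, i, j) \<in> pos_roots I d \<Longrightarrow> pair I d l (root (a, i, j)) = l (a, i) - l (a, j)"
  by (simp add: root_def pair_diff pair_beta pos_roots_def idx_def)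

lemma neg_pos_roots_lam:
  assumes "finite I" "x < y"
  shows "{r\<in>pos_roots I d. pair I d (lam c x y) (root r) < 0}
    = {(a, i, j). a \<in> I \<and> 1 \<le> i \<and> i \<le> c a \<and> c a < j \<and> j \<le> d a}"
  using assms by (auto simp: pair_root pos_roots_def lam_def split: if_splits)

lemma rho_part_lam_apply:
  assumes "finite I" "x < y"
  shows "rho_part I d (lam c x y) (b, k) =
    (if (b, k) \<in> idx I d then if k \<le> c b then real (d b - c b) / 2 else - real (c b) / 2 else 0)"
proof -
  let ?N = "{(a, i, j). a \<in> I \<and> 1 \<le> i \<and> i \<le> c a \<and> c a < j \<and> j \<le> d a}"
  have fin: "finite ?N"
    using finite_pos_roots[OF assms(1), of d] by (rule finite_subset[rotated]) (auto simp: pos_roots_def)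
  have up: "{r\<in>?N. (fst r, fst (snd r)) = (b, k)}
      = (if (b, k) \<in> idx I d \<and> k \<le> c b then (\<lambda>j. (b, k, j)) ` {c b<..d b} else {})"
    by (auto simp: idx_def)
  have down: "{r\<in>?N. (fst r, snd (snd r)) = (b, k)}
      = (if (b, k) \<in> idx I d \<and> c b < k then (\<lambda>i. (b, i, k)) ` {1..c b} else {})"
    by (auto simp: idx_def)
  show ?thesis
    unfolding rho_part_def neg_pos_roots_lam[OF assms] sum_root_apply[OF fin] up down
    by (simp add: card_image inj_on_def)
qed

lemma weyl_act_wef_rho:
  assumes "finite I" "x < y" "d = (\<lambda>a. e a + f a)"
  shows "(\<lambda>q. weyl_act I d (wef e f) (rho I d) q - rho I d q) = (\<lambda>q. - 2 * rho_part I d (lam f x y) q)"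
proof
  fix q :: "'a \<times> nat"
  obtain b k where q: "q = (b, k)" by force
  show "weyl_act I d (wef e f) (rho I d) q - rho I d q = - 2 * rho_part I d (lam f x y) q"
  proof (cases "(b, k) \<in> idx I d")
    case True
    then have "(b, wef f e b k) \<in> idx I d"
      using assms(3) wef_in_range[of k f b e] by (auto simp: idx_def)
    with True show ?thesis
      unfolding q weyl_act_wef_apply[OF assms(1,3) True]
      using assms(3)
      by (auto simp: rho_apply rho_part_lam_apply assms(1,2) wef_def idx_def of_nat_diff field_simps)
  next
    case False
    have "\<forall>a\<in>I. wef e f a ` {1..d a} \<subseteq> {1..d a}"
      using assms(3) bij_betw_imp_surj_on[OF bij_betw_wef[of e f]] by simp
    with False show ?thesis
      unfolding q by (simp add: weyl_act_outside_idx rho_apply rho_part_lam_apply assms(1,2))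
  qed
qed

definition arrow_weight :: "('e \<Rightarrow> 'i) \<Rightarrow> ('e \<Rightarrow> 'i) \<Rightarrow> 'e \<times> nat \<times> nat \<Rightarrow> 'i weight" where
  "arrow_weight src tgt = (\<lambda>(a, i, j). (\<lambda>q. beta (tgt a) j q - beta (src a) i q))"

definition neg_weight_indices ::
    "'e set \<Rightarrow> ('e \<Rightarrow> 'i) \<Rightarrow> ('e \<Rightarrow> 'i) \<Rightarrow> ('i \<Rightarrow> nat) \<Rightarrow> ('i \<Rightarrow> nat) \<Rightarrow> ('e \<times> nat \<times> nat) set" where
  "neg_weight_indices E src tgt d c =
     {(a, i, j). a \<in> E \<and> c (src a) < i \<and> i \<le> d (src a) \<and> 1 \<le> j \<and> j \<le> c (tgt a)}"

lemma pair_arrow_weight: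
  "finite I \<Longrightarrow> (src a, i) \<in> idx I d \<Longrightarrow> (tgt a, j) \<in> idx I d \<Longrightarrow>
    pair I d l (arrow_weight src tgt (a, i, j)) = l (tgt a, j) - l (src a, i)"
  by (simp add: arrow_weight_def pair_diff pair_beta)

lemma weights_neg_lam:
  assumes "finite I" "finite E" "\<forall>a\<in>E. src a \<in> I \<and> tgt a \<in> I" "x < y" "c \<le> d"
  shows "weights_neg I E src tgt d (lam c x y)
    = image_mset (arrow_weight src tgt) (mset_set (neg_weight_indices E src tgt d c))"
proof -
  define T where "T = {(a, i, j). a \<in> E \<and> 1 \<le> i \<and> i \<le> d (src a) \<and> 1 \<le> j \<and> j \<le> d (tgt a)}"
  have "finite T"
    by (rule finite_subset[of _ "Sigma E (\<lambda>a. {1..d (src a)} \<times> {1..d (tgt a)})"])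
      (auto simp: T_def assms(2))
  have "t \<in> T \<and> pair I d (lam c x y) (arrow_weight src tgt t) < 0 \<longleftrightarrow>
      t \<in> neg_weight_indices E src tgt d c" for t
  proof -
    obtain a i j where t: "t = (a, i, j)" by (cases t)
    show ?thesis
    proof (cases "t \<in> T")
      case True
      then have "(src a, i) \<in> idx I d" "(tgt a, j) \<in> idx I d"
        using assms(3) by (auto simp: T_def idx_def t)
      with True show ?thesis
        using assms(4,5)
        by (auto simp: t T_def neg_weight_indices_def pair_arrow_weight[OF assms(1)] lam_def le_fun_def)
    next
      case False
      then show ?thesis
        using assms(5) by (auto simp: t T_def neg_weight_indices_def le_fun_def dest: spec[of _ "tgt a"])
    qed
  qed
  then have "{t\<in>T. pair I d (lam c x y) (arrow_weight src tgt t) < 0} = neg_weight_indices E src tgt d c"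
    by blast
  moreover have "weights E src tgt d = image_mset (arrow_weight src tgt) (mset_set T)"
    unfolding weights_def arrow_weight_def T_def ..
  ultimately show ?thesis
    using \<open>finite T\<close> by (simp add: weights_neg_def filter_mset_image_mset)
qed

definition reverses_arrows :: "'e set \<Rightarrow> ('e \<Rightarrow> 'i) \<Rightarrow> ('e \<Rightarrow> 'i) \<Rightarrow> ('e \<Rightarrow> 'e) \<Rightarrow> bool" where
  "reverses_arrows E src tgt \<phi> \<longleftrightarrow> (\<forall>a\<in>E. \<phi> a \<in> E \<and> src (\<phi> a) = tgt a \<and> tgt (\<phi> a) = src a)"

lemma symmetric_quiver_reversal:
  assumes "symmetric_quiver I E src tgt"
  obtains \<phi> where "bij_betw \<phi> E E" "reverses_arrows E src tgt \<phi>"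
proof -
  define arrows where "arrows i j = {a\<in>E. src a = i \<and> tgt a = j}" for i j
  have "\<exists>h. bij_betw h (arrows i j) (arrows j i)" for i j
  proof (cases "i \<in> I \<and> j \<in> I")
    case True
    then have "card (arrows i j) = card (arrows j i)" "finite (arrows i j)" "finite (arrows j i)"
      using assms by (auto simp: symmetric_quiver_def arrows_def)
    then show ?thesis using finite_same_card_bij by blast
  next
    case False
    then have "arrows i j = {}" "arrows j i = {}"
      using assms by (auto simp: symmetric_quiver_def arrows_def)
    then show ?thesis by auto
  qed
  then obtain h where h: "\<And>i j. bij_betw (h i j) (arrows i j) (arrows j i)" by metis
  define \<phi> where "\<phi> a = h (src a) (tgt a) a" for a
  have rev: "reverses_arrows E src tgt \<phi>"
    unfolding reverses_arrows_def
  proof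
    fix a assume "a \<in> E"
    then have "\<phi> a \<in> arrows (tgt a) (src a)"
      unfolding \<phi>_def using bij_betw_apply[OF h] by (simp add: arrows_def)
    then show "\<phi> a \<in> E \<and> src (\<phi> a) = tgt a \<and> tgt (\<phi> a) = src a" by (simp add: arrows_def)
  qed
  have "inj_on \<phi> E"
  proof (rule inj_onI)
    fix a a' assume a: "a \<in> E" "a' \<in> E" "\<phi> a = \<phi> a'"
    then have "src a = src a'" "tgt a = tgt a'"
      using rev by (metis reverses_arrows_def)+
    with a have "a \<in> arrows (src a) (tgt a)" "a' \<in> arrows (src a) (tgt a)"
      "h (src a) (tgt a) a = h (src a) (tgt a) a'"
      by (auto simp: arrows_def \<phi>_def)
    then show "a = a'" using bij_betw_imp_inj_on[OF h] inj_onD by metis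
  qed
  moreover have "E \<subseteq> \<phi> ` E"
  proof
    fix b assume "b \<in> E"
    then have "b \<in> h (tgt b) (src b) ` arrows (tgt b) (src b)"
      using bij_betw_imp_surj_on[OF h] by (simp add: arrows_def)
    then obtain a where "a \<in> arrows (tgt b) (src b)" "b = h (tgt b) (src b) a" by blast
    then have "a \<in> E" "b = \<phi> a" by (auto simp: arrows_def \<phi>_def)
    then show "b \<in> \<phi> ` E" by blast
  qed
  ultimately have "bij_betw \<phi> E E"
    using rev by (auto simp: bij_betw_def reverses_arrows_def)
  with rev show ?thesis using that by blast
qed

definition reverse_index ::
    "('e \<Rightarrow> 'e) \<Rightarrow> ('e \<Rightarrow> 'i) \<Rightarrow> ('e \<Rightarrow> 'i) \<Rightarrow> ('i \<Rightarrow> nat) \<Rightarrow> ('i \<Rightarrow> nat) \<Rightarrow>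
      'e \<times> nat \<times> nat \<Rightarrow> 'e \<times> nat \<times> nat" where
  "reverse_index \<phi> src tgt c c' = (\<lambda>(a, i, j). (\<phi> a, j + c' (tgt a), i - c (src a)))"

lemma reverse_index_mem:
  assumes "reverses_arrows E src tgt \<phi>" "d = (\<lambda>a. c a + c' a)"
    and "t \<in> neg_weight_indices E src tgt d c"
  shows "reverse_index \<phi> src tgt c c' t \<in> neg_weight_indices E src tgt d c'"
  using assms by (auto simp: reverses_arrows_def neg_weight_indices_def reverse_index_def)

lemma reverse_index_inverse:
  assumes "reverses_arrows E src tgt \<phi>" "\<forall>a\<in>E. \<psi> (\<phi> a) = a"
    and "t \<in> neg_weight_indices E src tgt d c"
  shows "reverse_index \<psi> src tgt c' c (reverse_index \<phi> src tgt c c' t) = t"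
  using assms by (auto simp: reverses_arrows_def neg_weight_indices_def reverse_index_def)

lemma bij_betw_reverse_index:
  assumes "bij_betw \<phi> E E" "reverses_arrows E src tgt \<phi>" "d = (\<lambda>a. c a + c' a)"
  shows "bij_betw (reverse_index \<phi> src tgt c c')
    (neg_weight_indices E src tgt d c) (neg_weight_indices E src tgt d c')"
proof -
  define \<psi> where "\<psi> = inv_into E \<phi>"
  have \<psi>\<phi>: "\<forall>a\<in>E. \<psi> (\<phi> a) = a" and \<phi>\<psi>: "\<forall>a\<in>E. \<phi> (\<psi> a) = a"
    using assms(1) by (auto simp: \<psi>_def bij_betw_inv_into_left bij_betw_inv_into_right)
  have "\<forall>a\<in>E. \<psi> a \<in> E"
    using bij_betw_apply[OF bij_betw_inv_into[OF assms(1)]] by (simp add: \<psi>_def)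
  with \<phi>\<psi> assms(2) have "reverses_arrows E src tgt \<psi>"
    unfolding reverses_arrows_def by metis
  moreover have "d = (\<lambda>a. c' a + c a)" using assms(3) by (simp add: add.commute)
  ultimately show ?thesis
    using reverse_index_mem[OF assms(2,3)] reverse_index_inverse[OF assms(2) \<psi>\<phi>]
      reverse_index_mem[where \<phi> = \<psi>] reverse_index_inverse[where \<phi> = \<psi>, OF _ \<phi>\<psi>]
    by (intro bij_betw_byWitness[where f' = "reverse_index \<psi> src tgt c' c"]) blast+
qed

lemma weyl_act_wef_arrow_weight:
  assumes "finite I" "\<forall>a\<in>E. src a \<in> I \<and> tgt a \<in> I" "d = (\<lambda>a. e a + f a)"
    and "reverses_arrows E src tgt \<phi>" "t \<in> neg_weight_indices E src tgt d f"
  shows "(\<lambda>q. - weyl_act I d (wef f e) (arrow_weight src tgt t) q)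
    = arrow_weight src tgt (reverse_index \<phi> src tgt f e t)"
proof -
  obtain a i j where t: "t = (a, i, j)" by (cases t)
  with assms(2,3,5) have "(src a, i) \<in> idx I d" "(tgt a, j) \<in> idx I d"
    by (auto simp: neg_weight_indices_def idx_def)
  with assms t show ?thesis
    by (auto simp: arrow_weight_def weyl_act_diff weyl_act_beta reverse_index_def wef_def
        reverses_arrows_def neg_weight_indices_def)
qed

lemma weights_neg_lam_reflection:
  assumes "symmetric_quiver I E src tgt" "d = (\<lambda>a. e a + f a)" "x1 < y1" "x2 < y2"
  shows "image_mset (\<lambda>b. (\<lambda>q. - weyl_act I d (wef f e) b q)) (weights_neg I E src tgt d (lam f x2 y2))
    = weights_neg I E src tgt d (lam e x1 y1)"
proof -
  have fin: "finite I" "finite E" and arrows: "\<forall>a\<in>E. src a \<in> I \<and> tgt a \<in> I"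
    using assms(1) by (auto simp: symmetric_quiver_def)
  obtain \<phi> where \<phi>: "bij_betw \<phi> E E" "reverses_arrows E src tgt \<phi>"
    using symmetric_quiver_reversal[OF assms(1)] by blast
  have "f \<le> d" "e \<le> d" using assms(2) by (simp_all add: le_fun_def)
  let ?Nf = "neg_weight_indices E src tgt d f" and ?Ne = "neg_weight_indices E src tgt d e"
  let ?r = "reverse_index \<phi> src tgt f e"
  have bij: "bij_betw ?r ?Nf ?Ne"
    using assms(2) by (intro bij_betw_reverse_index[OF \<phi>]) (simp add: add.commute)
  have "finite ?Nf"
    by (rule finite_subset[of _ "Sigma E (\<lambda>a. {1..d (src a)} \<times> {1..d (tgt a)})"])
      (auto simp: neg_weight_indices_def fin assms(2))
  have "image_mset (\<lambda>b. (\<lambda>q. - weyl_act I d (wef f e) b q)) (weights_neg I E src tgt d (lam f x2 y2))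
      = image_mset (arrow_weight src tgt \<circ> ?r) (mset_set ?Nf)"
    unfolding weights_neg_lam[OF fin arrows assms(4) \<open>f \<le> d\<close>] multiset.map_comp
    using \<open>finite ?Nf\<close> weyl_act_wef_arrow_weight[OF fin(1) arrows assms(2) \<phi>(2)]
    by (intro image_mset_cong) simp
  also have "\<dots> = image_mset (arrow_weight src tgt) (mset_set (?r ` ?Nf))"
    by (simp add: image_mset_mset_set[OF bij_betw_imp_inj_on[OF bij], symmetric] multiset.map_comp)
  also have "\<dots> = weights_neg I E src tgt d (lam e x1 y1)"
    using weights_neg_lam[OF fin arrows assms(3) \<open>e \<le> d\<close>] bij_betw_imp_surj_on[OF bij] by simp
  finally show ?thesis .
qed

theorem proposition4p4:
  fixes I :: "'i set" and E :: "'e set" and src tgt :: "'e \<Rightarrow> 'i"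
    and e f d :: "'i \<Rightarrow> nat" and x1 y1 x2 y2 :: real
  assumes "symmetric_quiver I E src tgt"
    and "d = (\<lambda>a. e a + f a)"
    and "x1 < y1" and "(\<Sum>a\<in>I. real (e a) * x1 + real (f a) * y1) = 0"
    and "x2 < y2" and "(\<Sum>a\<in>I. real (f a) * x2 + real (e a) * y2) = 0"
  shows "(\<lambda>q. weyl_act I d (wef e f) (rho I d) q - rho I d q)
           = (\<lambda>q. - 2 * rho_part I d (lam f x2 y2) q)
     \<and> image_mset (\<lambda>b. (\<lambda>q. - weyl_act I d (wef f e) b q)) (weights_neg I E src tgt d (lam f x2 y2))
           = weights_neg I E src tgt d (lam e x1 y1)"
proof
  have "finite I" using assms(1) by (simp add: symmetric_quiver_def)
  then show "(\<lambda>q. weyl_act I d (wef e f) (rho I d) q - rho I d q)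
      = (\<lambda>q. - 2 * rho_part I d (lam f x2 y2) q)"
    by (rule weyl_act_wef_rho[OF _ assms(5,2)])
  show "image_mset (\<lambda>b. (\<lambda>q. - weyl_act I d (wef f e) b q)) (weights_neg I E src tgt d (lam f x2 y2))
      = weights_neg I E src tgt d (lam e x1 y1)"
    by (rule weights_neg_lam_reflection[OF assms(1,2,3,5)])
qed

end
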